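(* Let $1\le m\le n/2$, $\delta>0$, $s:=m-\delta^2$, and put $$d=\frac{2m(n-m)}{n(n-1)(n+2)},\quad b=\frac{4(n-2m)^2}{n(n-2)(n+4)},\quad c=\frac{2m^2(n-m)^2}{n^2(n-1)(n+2)}.$$ If $s\in\Big]\frac{m^2}{n},\ \frac{m^2}{n}+\frac b2+\sqrt{\frac{b^2}{4}+c}\Big[$, then every $\delta$-code $C\subset\mathcal G_{m,n}$ satisfies $$|C|\le\frac{(m-s)\big(s-\frac{m^2}{n}+d\big)^2(n-1)(n+2)}{2\big(s-\frac{m^2}{n}\big)\Big(-\big(s-\frac{m^2}{n}\big)^2+b\big(s-\frac{m^2}{n}\big)+c\Big)}.$$
   Context: $\mathcal G_{m,n}$ is the set of $m$-dimensional linear subspaces of $\mathbb R^n$. For $p,q\in\mathcal G_{m,n}$ with principal angles $\theta_1,\dots,\theta_m\in[0,\pi/2]$ (defined recursively: $\theta_1$ is the minimal angle between a line of $p$ and a line of $q$, the rest are the principal angles of the orthogonal complements of these lines in $p$ and $q$), the chordal distance is $d_c(p,q)=\sqrt{\sum_i\sin^2\theta_i}$. A $\delta$-code is a finite $C\subset\mathcal G_{m,n}$ with $d_c(p,q)\ge\delta$ for all distinct $p,q\in C$. *)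

theory Defs
  imports "HOL-Analysis.Analysis"
begin

definition grassmannian :: "nat \<Rightarrow> ('a::euclidean_space) set set" where
  "grassmannian m = {p. subspace p \<and> dim p = m}"

inductive principal_angles :: "('a::euclidean_space) set \<Rightarrow> 'a set \<Rightarrow> real list \<Rightarrow> bool" where
  Nil: "p = {0} \<Longrightarrow> q = {0} \<Longrightarrow> principal_angles p q []"
| Cons: "\<lbrakk> u \<in> p; v \<in> q; norm u = 1; norm v = 1;
           \<theta> = arccos \<bar>u \<bullet> v\<bar>;
           \<forall>x\<in>p. \<forall>y\<in>q. norm x = 1 \<longrightarrow> norm y = 1 \<longrightarrow> \<theta> \<le> arccos \<bar>x \<bullet> y\<bar>;
           principal_angles (p \<inter> {x. x \<bullet> u = 0}) (q \<inter> {y. y \<bullet> v = 0}) \<theta>s \<rbrakk>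
         \<Longrightarrow> principal_angles p q (\<theta> # \<theta>s)"

definition chordal_dist :: "('a::euclidean_space) set \<Rightarrow> 'a set \<Rightarrow> real" where
  "chordal_dist p q =
     sqrt (sum_list (map (\<lambda>\<theta>. (sin \<theta>)\<^sup>2) (SOME \<theta>s. principal_angles p q \<theta>s)))"

definition delta_code :: "nat \<Rightarrow> real \<Rightarrow> ('a::euclidean_space) set set \<Rightarrow> bool" where
  "delta_code m \<delta> C \<longleftrightarrow> finite C \<and> C \<subseteq> grassmannian m \<and>
     (\<forall>p\<in>C. \<forall>q\<in>C. p \<noteq> q \<longrightarrow> chordal_dist p q \<ge> \<delta>)"

end

(*
  Let P_p be the orthogonal projection onto p and X_p = P_p - (m/n) I.  Expanding P_p and P_q in
  bases of principal vectors gives <X_p, X_q> = sum_i cos^2 theta_i - m^2/n = m - d_c(p,q)^2 - m^2/n,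
  so on a delta-code <X_p, X_p> = M := m - m^2/n and <X_p, X_q> <= t := s - m^2/n for p ~= q.

  Every X_p is traceless symmetric with X_p^2 = alpha X_p + beta I.  For weights w, Bessel's
  inequality for the tensor S = sum_p w_p X_p (x) X_p against two orthogonal tensors, the identity
  E on traceless symmetric matrices and the Jordan multiplication F by A = sum_p w_p X_p, says
  that g(<X_p, X_q>) with g(x) = x^2 - b x - c is a positive semidefinite kernel on the code; so
  are <X_p, X_q> itself and, by the Schur product theorem, <X_p, X_q> g(<X_p, X_q>).

  The polynomial (x - t)(x + c/t)^2 is nonpositive for x <= t and a combination of 1, x, g(x) and
  x g(x) with nonnegative coefficients and positive constant term.  Summing it over all pairs of
  the code (Delsarte's linear programming argument) bounds |C| by its value at M divided by that
  constant term, which is the stated bound.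
*)
theory Submission
  imports Defs
begin

section \<open>Matrices and 4-tensors indexed by a finite type\<close>

definition kdelta :: "'n \<Rightarrow> 'n \<Rightarrow> real" where
  "kdelta i j = (if i = j then 1 else 0)"

lemma kdelta_mult:
  "kdelta i j * x = (if i = j then x else 0)" "x * kdelta i j = (if i = j then x else 0)"
  by (simp_all add: kdelta_def)

lemma if_zero_arith:
  "(if P then x else 0) * y = (if P then x * y else (0::real))"
  "y * (if P then x else 0) = (if P then y * x else (0::real))"
  "(if P then x else 0) / c = (if P then x / c else (0::real))"
  "- (if P then x else 0) = (if P then - x else (0::real))"
  "(\<Sum>l\<in>A. if P then f l else (0::real)) = (if P then (\<Sum>l\<in>A. f l) else 0)"
  by auto

lemmas kdelta_simps = kdelta_mult if_zero_arith

definition mat_inner :: "('n::finite \<Rightarrow> 'n \<Rightarrow> real) \<Rightarrow> ('n \<Rightarrow> 'n \<Rightarrow> real) \<Rightarrow> real" where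
  "mat_inner X Y = (\<Sum>i\<in>UNIV. \<Sum>j\<in>UNIV. X i j * Y i j)"

lemma mat_inner_self_nonneg: "mat_inner X X \<ge> 0"
  unfolding mat_inner_def by (intro sum_nonneg) auto

definition tensor_inner ::
  "('n::finite \<Rightarrow> 'n \<Rightarrow> 'n \<Rightarrow> 'n \<Rightarrow> real) \<Rightarrow> ('n \<Rightarrow> 'n \<Rightarrow> 'n \<Rightarrow> 'n \<Rightarrow> real) \<Rightarrow> real" where
  "tensor_inner T U = (\<Sum>i\<in>UNIV. \<Sum>j\<in>UNIV. \<Sum>k\<in>UNIV. \<Sum>l\<in>UNIV. T i j k l * U i j k l)"

lemma tensor_inner_commute: "tensor_inner T U = tensor_inner U T"
  unfolding tensor_inner_def by (simp add: mult.commute)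

lemma tensor_inner_diff_left:
  "tensor_inner (\<lambda>i j k l. T i j k l - a * E i j k l - g * F i j k l) U =
     tensor_inner T U - a * tensor_inner E U - g * tensor_inner F U"
  unfolding tensor_inner_def by (simp add: algebra_simps sum.distrib sum_subtractf sum_distrib_left)

lemma tensor_inner_self_nonneg: "tensor_inner T T \<ge> 0"
  unfolding tensor_inner_def by (intro sum_nonneg) auto

lemma tensor_inner_outer:
  "tensor_inner (\<lambda>i j k l. X i j * X k l) (\<lambda>i j k l. Y i j * Y k l) = (mat_inner X Y)\<^sup>2"
  unfolding tensor_inner_def mat_inner_def power2_eq_square sum_product
  apply (rule sum.cong[OF refl])
  apply (rule trans[OF sum.swap])
  apply (rule sum.cong[OF refl])+
  apply (simp add: algebra_simps)
  done

text \<open>The orthogonal projection onto traceless symmetric matrices, as a 4-tensor.\<close>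
definition traceless_id :: "'n::finite \<Rightarrow> 'n \<Rightarrow> 'n \<Rightarrow> 'n \<Rightarrow> real" where
  "traceless_id i j k l =
     (kdelta i k * kdelta j l + kdelta i l * kdelta j k) / 2 - kdelta i j * kdelta k l / real CARD('n)"

text \<open>The tensor of the map \<open>Y \<mapsto> (A Y + Y A)/2 - tr (A Y)/n I - tr Y/n A\<close>.\<close>
definition jordan_tensor :: "('n::finite \<Rightarrow> 'n \<Rightarrow> real) \<Rightarrow> 'n \<Rightarrow> 'n \<Rightarrow> 'n \<Rightarrow> 'n \<Rightarrow> real" where
  "jordan_tensor A i j k l =
     (kdelta j k * A l i + kdelta i l * A k j + kdelta i k * A l j + kdelta j l * A k i) / 4
     - (kdelta i j * A k l + A i j * kdelta k l) / real CARD('n)"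

lemma tensor_inner_traceless_id:
  fixes T :: "'n::finite \<Rightarrow> 'n \<Rightarrow> 'n \<Rightarrow> 'n \<Rightarrow> real"
  shows "tensor_inner traceless_id T =
    ((\<Sum>i\<in>UNIV. \<Sum>j\<in>UNIV. T i j i j) + (\<Sum>i\<in>UNIV. \<Sum>j\<in>UNIV. T i j j i)) / 2
    - (\<Sum>i\<in>UNIV. \<Sum>k\<in>UNIV. T i i k k) / real CARD('n)"
  unfolding tensor_inner_def traceless_id_def
  by (simp add: algebra_simps sum.distrib sum_subtractf sum_divide_distrib[symmetric] kdelta_simps
      cong: if_cong)

lemma tensor_inner_jordan_tensor:
  fixes T :: "'n::finite \<Rightarrow> 'n \<Rightarrow> 'n \<Rightarrow> 'n \<Rightarrow> real"
  shows "tensor_inner (jordan_tensor A) T =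
    ((\<Sum>i\<in>UNIV. \<Sum>j\<in>UNIV. \<Sum>l\<in>UNIV. A l i * T i j j l)
      + (\<Sum>i\<in>UNIV. \<Sum>j\<in>UNIV. \<Sum>k\<in>UNIV. A k j * T i j k i)
      + (\<Sum>i\<in>UNIV. \<Sum>j\<in>UNIV. \<Sum>l\<in>UNIV. A l j * T i j i l)
      + (\<Sum>i\<in>UNIV. \<Sum>j\<in>UNIV. \<Sum>k\<in>UNIV. A k i * T i j k j)) / 4
    - ((\<Sum>i\<in>UNIV. \<Sum>k\<in>UNIV. \<Sum>l\<in>UNIV. A k l * T i i k l)
      + (\<Sum>i\<in>UNIV. \<Sum>j\<in>UNIV. \<Sum>k\<in>UNIV. A i j * T i j k k)) / real CARD('n)"
  unfolding jordan_tensor_def tensor_inner_def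
  by (simp add: algebra_simps sum.distrib sum_subtractf sum_divide_distrib[symmetric] kdelta_simps
      cong: if_cong)

lemma traceless_id_norm:
  "tensor_inner traceless_id (traceless_id :: 'n::finite \<Rightarrow> _) =
     real CARD('n) * (real CARD('n) + 1) / 2 - 1"
  unfolding tensor_inner_traceless_id unfolding traceless_id_def
  by (simp add: algebra_simps sum.distrib sum_subtractf sum_divide_distrib[symmetric] kdelta_simps
      cong: if_cong) (simp add: field_simps kdelta_def)

context
  fixes B :: "'n::finite \<Rightarrow> 'n \<Rightarrow> real"
  assumes sym: "\<And>i j. B i j = B j i" and traceless: "(\<Sum>i\<in>UNIV. B i i) = 0"
begin

lemma traceless_sym_contractions:
  "(\<Sum>i\<in>UNIV. \<Sum>l\<in>UNIV. B i l * B i l) = mat_inner B B"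
  "(\<Sum>i\<in>UNIV. \<Sum>l\<in>UNIV. B l i * B l i) = mat_inner B B"
  "(\<Sum>i\<in>UNIV. \<Sum>l\<in>UNIV. B i l * B l i) = mat_inner B B"
  "(\<Sum>i\<in>UNIV. \<Sum>l\<in>UNIV. B l i * B i l) = mat_inner B B"
  "(\<Sum>i\<in>UNIV. \<Sum>j\<in>UNIV. B i i * B j j) = 0"
  "(\<Sum>i\<in>UNIV. B i i * c) = 0"
  "(\<Sum>i\<in>UNIV. c * B i i) = 0"
  unfolding mat_inner_def
  by (simp_all add: sum_product[symmetric] sum_distrib_right[symmetric] sum_distrib_left[symmetric]
      traceless)
    (rule sum.swap, (intro sum.cong refl, metis sym)+)

lemma jordan_tensor_contractions:
  "(\<Sum>i\<in>UNIV. \<Sum>j\<in>UNIV. \<Sum>l\<in>UNIV. B l i * jordan_tensor B i j j l) =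
     ((real CARD('n) + 2) / 4 - 2 / real CARD('n)) * mat_inner B B"
  "(\<Sum>i\<in>UNIV. \<Sum>j\<in>UNIV. \<Sum>k\<in>UNIV. B k j * jordan_tensor B i j k i) =
     ((real CARD('n) + 2) / 4 - 2 / real CARD('n)) * mat_inner B B"
  "(\<Sum>i\<in>UNIV. \<Sum>j\<in>UNIV. \<Sum>l\<in>UNIV. B l j * jordan_tensor B i j i l) =
     ((real CARD('n) + 2) / 4 - 2 / real CARD('n)) * mat_inner B B"
  "(\<Sum>i\<in>UNIV. \<Sum>j\<in>UNIV. \<Sum>k\<in>UNIV. B k i * jordan_tensor B i j k j) =
     ((real CARD('n) + 2) / 4 - 2 / real CARD('n)) * mat_inner B B"
  "(\<Sum>i\<in>UNIV. \<Sum>k\<in>UNIV. \<Sum>l\<in>UNIV. B k l * jordan_tensor B i i k l) = 0"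
  "(\<Sum>i\<in>UNIV. \<Sum>j\<in>UNIV. \<Sum>k\<in>UNIV. B i j * jordan_tensor B i j k k) = 0"
  unfolding jordan_tensor_def
  by (simp_all add: algebra_simps sum.distrib sum_subtractf sum_divide_distrib[symmetric]
      kdelta_simps traceless cong: if_cong)
    (simp_all add: mult.assoc[symmetric] sum_distrib_right[symmetric] sum_distrib_left[symmetric]
      traceless_sym_contractions, simp_all add: field_simps traceless)

lemma jordan_tensor_norm:
  "tensor_inner (jordan_tensor B) (jordan_tensor B) =
     ((real CARD('n) + 2) / 4 - 2 / real CARD('n)) * mat_inner B B"
  unfolding tensor_inner_jordan_tensor jordan_tensor_contractions by simp

lemma traceless_id_jordan_tensor: "tensor_inner traceless_id (jordan_tensor B) = 0"
  unfolding tensor_inner_traceless_id unfolding jordan_tensor_def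
  by (simp add: algebra_simps sum.distrib sum_subtractf sum_divide_distrib[symmetric]
      kdelta_simps traceless cong: if_cong)
    (simp add: mult.assoc[symmetric] sum_distrib_right[symmetric] sum_distrib_left[symmetric]
      traceless_sym_contractions traceless)

end

lemma tensor_inner_traceless_id_outer:
  assumes sym: "\<And>i j. X i j = X j i" and traceless: "(\<Sum>i\<in>UNIV. X i i) = 0"
  shows "tensor_inner traceless_id (\<lambda>i j k l. X i j * X k l) = mat_inner X X"
proof -
  have "(\<Sum>i\<in>UNIV. \<Sum>k\<in>UNIV. X i i * X k k) = 0"
    by (simp add: sum_product[symmetric] traceless)
  moreover have "(\<Sum>i\<in>UNIV. \<Sum>j\<in>UNIV. X i j * X j i) = mat_inner X X"
    unfolding mat_inner_def by (intro sum.cong refl) (metis sym)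
  ultimately show ?thesis
    unfolding tensor_inner_traceless_id by (simp add: mat_inner_def)
qed

context
  fixes X B :: "'n::finite \<Rightarrow> 'n \<Rightarrow> real" and \<alpha> \<beta> :: real
  assumes symX: "\<And>i j. X i j = X j i" and traceless_X: "(\<Sum>i\<in>UNIV. X i i) = 0"
    and square_X: "\<And>i l. (\<Sum>j\<in>UNIV. X i j * X j l) = \<alpha> * X i l + \<beta> * kdelta i l"
    and symB: "\<And>i j. B i j = B j i" and traceless_B: "(\<Sum>i\<in>UNIV. B i i) = 0"
begin

lemma trace_mult_square:
  "(\<Sum>i\<in>UNIV. \<Sum>l\<in>UNIV. B l i * (\<Sum>j\<in>UNIV. X i j * X j l)) = \<alpha> * mat_inner B X"
proof -
  have "(\<Sum>i\<in>UNIV. \<Sum>l\<in>UNIV. B l i * (\<Sum>j\<in>UNIV. X i j * X j l))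
      = \<alpha> * (\<Sum>i\<in>UNIV. \<Sum>l\<in>UNIV. B l i * X i l) + \<beta> * (\<Sum>i\<in>UNIV. B i i)"
    by (simp add: square_X algebra_simps sum.distrib sum_distrib_left kdelta_simps)
  then show ?thesis
    using traceless_B symB by (simp add: mat_inner_def mult.commute)
qed

text \<open>Each of the four mixed contractions becomes \<open>tr (B X\<^sup>2)\<close> after reordering the sums and
  using the symmetry of \<open>X\<close>; the two trace contractions vanish.\<close>
lemma tensor_inner_jordan_tensor_outer:
  "tensor_inner (jordan_tensor B) (\<lambda>i j k l. X i j * X k l) = \<alpha> * mat_inner B X"
proof -
  have swap23: "(\<Sum>i\<in>UNIV. \<Sum>j\<in>UNIV. \<Sum>l\<in>UNIV. f i j l) = (\<Sum>i\<in>UNIV. \<Sum>l\<in>UNIV. \<Sum>j\<in>UNIV. f i j l)"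
    for f :: "'n \<Rightarrow> 'n \<Rightarrow> 'n \<Rightarrow> real"
    by (rule sum.cong[OF refl], rule sum.swap)
  have rotate: "(\<Sum>i\<in>UNIV. \<Sum>j\<in>UNIV. \<Sum>k\<in>UNIV. f i j k) = (\<Sum>j\<in>UNIV. \<Sum>k\<in>UNIV. \<Sum>i\<in>UNIV. f i j k)"
    for f :: "'n \<Rightarrow> 'n \<Rightarrow> 'n \<Rightarrow> real"
    by (rule trans[OF sum.swap], rule sum.cong[OF refl], rule sum.swap)
  have t1: "(\<Sum>i\<in>UNIV. \<Sum>j\<in>UNIV. \<Sum>l\<in>UNIV. B l i * (X i j * X j l)) = \<alpha> * mat_inner B X"
    unfolding trace_mult_square[symmetric] swap23[of "\<lambda>i j l. B l i * (X i j * X j l)"]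
    by (simp only: sum_distrib_left)
  have "(\<Sum>i\<in>UNIV. \<Sum>j\<in>UNIV. \<Sum>k\<in>UNIV. B k j * (X i j * X k i))
      = (\<Sum>j\<in>UNIV. \<Sum>k\<in>UNIV. \<Sum>i\<in>UNIV. B k j * (X j i * X i k))"
    unfolding rotate[of "\<lambda>i j k. B k j * (X i j * X k i)"] by (intro sum.cong refl) (metis symX)
  then have t2: "(\<Sum>i\<in>UNIV. \<Sum>j\<in>UNIV. \<Sum>k\<in>UNIV. B k j * (X i j * X k i)) = \<alpha> * mat_inner B X"
    using trace_mult_square by (simp add: sum_distrib_left)
  have "(\<Sum>i\<in>UNIV. \<Sum>j\<in>UNIV. \<Sum>k\<in>UNIV. B k j * (X i j * X i k))
      = (\<Sum>j\<in>UNIV. \<Sum>k\<in>UNIV. \<Sum>i\<in>UNIV. B k j * (X j i * X i k))"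
    unfolding rotate[of "\<lambda>i j k. B k j * (X i j * X i k)"] by (intro sum.cong refl) (metis symX)
  then have t3: "(\<Sum>i\<in>UNIV. \<Sum>j\<in>UNIV. \<Sum>k\<in>UNIV. B k j * (X i j * X i k)) = \<alpha> * mat_inner B X"
    using trace_mult_square by (simp add: sum_distrib_left)
  have "(\<Sum>i\<in>UNIV. \<Sum>j\<in>UNIV. \<Sum>k\<in>UNIV. B k i * (X i j * X k j))
      = (\<Sum>i\<in>UNIV. \<Sum>k\<in>UNIV. \<Sum>j\<in>UNIV. B k i * (X i j * X j k))"
    unfolding swap23[of "\<lambda>i j k. B k i * (X i j * X k j)"] by (intro sum.cong refl) (metis symX)
  then have t4: "(\<Sum>i\<in>UNIV. \<Sum>j\<in>UNIV. \<Sum>k\<in>UNIV. B k i * (X i j * X k j)) = \<alpha> * mat_inner B X"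
    using trace_mult_square by (simp add: sum_distrib_left)
  have "(\<Sum>i\<in>UNIV. \<Sum>k\<in>UNIV. \<Sum>l\<in>UNIV. B k l * (X i i * X k l))
      = (\<Sum>i\<in>UNIV. X i i * (\<Sum>k\<in>UNIV. \<Sum>l\<in>UNIV. B k l * X k l))"
    by (simp add: sum_distrib_left algebra_simps)
  then have t5: "(\<Sum>i\<in>UNIV. \<Sum>k\<in>UNIV. \<Sum>l\<in>UNIV. B k l * (X i i * X k l)) = 0"
    by (simp add: sum_distrib_right[symmetric] traceless_X)
  have "(\<Sum>i\<in>UNIV. \<Sum>j\<in>UNIV. \<Sum>k\<in>UNIV. B i j * (X i j * X k k))
      = (\<Sum>i\<in>UNIV. \<Sum>j\<in>UNIV. B i j * X i j * (\<Sum>k\<in>UNIV. X k k))"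
    by (simp add: sum_distrib_left algebra_simps)
  then have t6: "(\<Sum>i\<in>UNIV. \<Sum>j\<in>UNIV. \<Sum>k\<in>UNIV. B i j * (X i j * X k k)) = 0"
    by (simp add: traceless_X)
  show ?thesis
    unfolding tensor_inner_jordan_tensor using t1 t2 t3 t4 t5 t6 by simp
qed

end

section \<open>Positive semidefinite kernels from Bessel's inequality\<close>

lemma tensor_inner_bessel:
  assumes orth: "tensor_inner E F = 0"
  shows "(tensor_inner S E)\<^sup>2 / tensor_inner E E + (tensor_inner S F)\<^sup>2 / tensor_inner F F
    \<le> tensor_inner S S"
proof -
  define a where "a = tensor_inner S E / tensor_inner E E"
  define g where "g = tensor_inner S F / tensor_inner F F"
  define V where "V = (\<lambda>i j k l. S i j k l - a * E i j k l - g * F i j k l)"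
  have lin: "tensor_inner U V = tensor_inner U S - a * tensor_inner U E - g * tensor_inner U F" for U
    unfolding V_def by (subst tensor_inner_commute, subst tensor_inner_diff_left, simp add: tensor_inner_commute)
  have "0 \<le> tensor_inner V V"
    by (rule tensor_inner_self_nonneg)
  also have "tensor_inner V V = tensor_inner S S
      - (2 * a * tensor_inner S E - a\<^sup>2 * tensor_inner E E)
      - (2 * g * tensor_inner S F - g\<^sup>2 * tensor_inner F F)"
    unfolding lin unfolding V_def tensor_inner_diff_left
    using orth tensor_inner_commute[of E S] tensor_inner_commute[of F S] tensor_inner_commute[of E F]
    by (simp add: power2_eq_square algebra_simps)
  also have "2 * a * tensor_inner S E - a\<^sup>2 * tensor_inner E E = (tensor_inner S E)\<^sup>2 / tensor_inner E E"
    unfolding a_def by (cases "tensor_inner E E = 0") (simp_all add: field_simps power2_eq_square)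
  also have "2 * g * tensor_inner S F - g\<^sup>2 * tensor_inner F F = (tensor_inner S F)\<^sup>2 / tensor_inner F F"
    unfolding g_def by (cases "tensor_inner F F = 0") (simp_all add: field_simps power2_eq_square)
  finally show ?thesis by simp
qed

definition weighted_mat :: "'a set \<Rightarrow> ('a \<Rightarrow> 'n \<Rightarrow> 'n \<Rightarrow> real) \<Rightarrow> ('a \<Rightarrow> real) \<Rightarrow> 'n \<Rightarrow> 'n \<Rightarrow> real" where
  "weighted_mat C X w i j = (\<Sum>p\<in>C. w p * X p i j)"

definition weighted_outer ::
  "'a set \<Rightarrow> ('a \<Rightarrow> 'n \<Rightarrow> 'n \<Rightarrow> real) \<Rightarrow> ('a \<Rightarrow> real) \<Rightarrow> 'n \<Rightarrow> 'n \<Rightarrow> 'n \<Rightarrow> 'n \<Rightarrow> real" where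
  "weighted_outer C X w i j k l = (\<Sum>p\<in>C. w p * (X p i j * X p k l))"

lemma mat_inner_weighted_mat:
  "mat_inner (weighted_mat C X w) (weighted_mat C X w) =
     (\<Sum>p\<in>C. \<Sum>q\<in>C. w p * w q * mat_inner (X p) (X q))"
proof -
  have "mat_inner (weighted_mat C X w) (weighted_mat C X w) =
      (\<Sum>i\<in>UNIV. \<Sum>j\<in>UNIV. \<Sum>p\<in>C. \<Sum>q\<in>C. w p * w q * (X p i j * X q i j))"
    unfolding mat_inner_def weighted_mat_def sum_product by (simp add: algebra_simps)
  also have "\<dots> = (\<Sum>p\<in>C. \<Sum>q\<in>C. \<Sum>i\<in>UNIV. \<Sum>j\<in>UNIV. w p * w q * (X p i j * X q i j))"
    by (simp only: sum.swap[where A=UNIV and B=C])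
  finally show ?thesis
    unfolding mat_inner_def sum_distrib_left .
qed

lemma tensor_inner_weighted_outer:
  "tensor_inner T (weighted_outer C X w) = (\<Sum>p\<in>C. w p * tensor_inner T (\<lambda>i j k l. X p i j * X p k l))"
  unfolding tensor_inner_def weighted_outer_def sum_distrib_left
  by (simp only: sum.swap[where A=UNIV and B=C]) (simp add: algebra_simps)

context
  fixes C :: "'a set" and X :: "'a \<Rightarrow> 'n::finite \<Rightarrow> 'n \<Rightarrow> real" and \<alpha> \<beta> :: real
  assumes symX: "\<And>p i j. p \<in> C \<Longrightarrow> X p i j = X p j i"
    and traceless_X: "\<And>p. p \<in> C \<Longrightarrow> (\<Sum>i\<in>UNIV. X p i i) = 0"
    and square_X: "\<And>p i l. p \<in> C \<Longrightarrow> (\<Sum>j\<in>UNIV. X p i j * X p j l) = \<alpha> * X p i l + \<beta> * kdelta i l"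
begin

lemma weighted_mat_sym: "weighted_mat C X w i j = weighted_mat C X w j i"
  unfolding weighted_mat_def by (intro sum.cong refl) (simp add: symX)

lemma weighted_mat_traceless: "(\<Sum>i\<in>UNIV. weighted_mat C X w i i) = 0"
  unfolding weighted_mat_def by (subst sum.swap) (simp add: sum_distrib_left[symmetric] traceless_X)

lemma mat_inner_self_quadratic:
  assumes "p \<in> C" shows "mat_inner (X p) (X p) = \<beta> * real CARD('n)"
proof -
  have "mat_inner (X p) (X p) = (\<Sum>i\<in>UNIV. \<Sum>j\<in>UNIV. X p i j * X p j i)"
    unfolding mat_inner_def by (intro sum.cong refl) (metis symX assms)
  also have "\<dots> = (\<Sum>i\<in>UNIV. \<alpha> * X p i i + \<beta>)"
    using square_X[OF assms] by (simp add: kdelta_def)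
  also have "\<dots> = \<beta> * real CARD('n)"
    using traceless_X[OF assms] by (simp add: sum.distrib sum_distrib_left[symmetric])
  finally show ?thesis .
qed

lemma weighted_outer_norm:
  "tensor_inner (weighted_outer C X w) (weighted_outer C X w) =
     (\<Sum>p\<in>C. \<Sum>q\<in>C. w p * w q * (mat_inner (X p) (X q))\<^sup>2)"
  unfolding tensor_inner_weighted_outer
  by (subst tensor_inner_commute, unfold tensor_inner_weighted_outer tensor_inner_outer sum_distrib_left)
    (intro sum.cong refl, simp add: algebra_simps mat_inner_def)

lemma traceless_id_weighted_outer:
  "tensor_inner traceless_id (weighted_outer C X w) = (\<Sum>p\<in>C. w p) * (\<beta> * real CARD('n))"
  unfolding tensor_inner_weighted_outer sum_distrib_right
  by (intro sum.cong refl) (simp add: tensor_inner_traceless_id_outer symX traceless_X mat_inner_self_quadratic)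

lemma jordan_tensor_weighted_outer:
  "tensor_inner (jordan_tensor (weighted_mat C X w)) (weighted_outer C X w) =
     \<alpha> * mat_inner (weighted_mat C X w) (weighted_mat C X w)"
proof -
  have "tensor_inner (jordan_tensor (weighted_mat C X w)) (weighted_outer C X w) =
      (\<Sum>p\<in>C. w p * (\<alpha> * mat_inner (weighted_mat C X w) (X p)))"
    unfolding tensor_inner_weighted_outer
    by (intro sum.cong refl arg_cong2[where f="(*)"] tensor_inner_jordan_tensor_outer[where \<beta>=\<beta>])
      (auto intro: symX traceless_X square_X weighted_mat_sym weighted_mat_traceless)
  also have "\<dots> = \<alpha> * mat_inner (weighted_mat C X w) (weighted_mat C X w)"
    unfolding mat_inner_def sum_distrib_left weighted_mat_def[of C X w]
    by (simp only: sum.swap[where A=C and B=UNIV]) (simp add: algebra_simps sum_distrib_left)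
  finally show ?thesis .
qed

lemma gram_kernel_nonneg:
  assumes b: "\<alpha>\<^sup>2 / ((real CARD('n) + 2) / 4 - 2 / real CARD('n)) = b"
    and c: "(\<beta> * real CARD('n))\<^sup>2 / (real CARD('n) * (real CARD('n) + 1) / 2 - 1) = c"
  shows "0 \<le> (\<Sum>p\<in>C. \<Sum>q\<in>C. w p * w q * ((mat_inner (X p) (X q))\<^sup>2 - b * mat_inner (X p) (X q) - c))"
proof -
  define A where "A = weighted_mat C X w"
  define S where "S = weighted_outer C X w"
  define lam where "lam = (real CARD('n) + 2) / 4 - 2 / real CARD('n)"
  define D where "D = real CARD('n) * (real CARD('n) + 1) / 2 - 1"
  define W where "W = (\<Sum>p\<in>C. w p)"
  have "(tensor_inner S traceless_id)\<^sup>2 / tensor_inner traceless_id (traceless_id :: 'n \<Rightarrow> _)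
      + (tensor_inner S (jordan_tensor A))\<^sup>2 / tensor_inner (jordan_tensor A) (jordan_tensor A)
      \<le> tensor_inner S S"
    unfolding A_def
    by (intro tensor_inner_bessel traceless_id_jordan_tensor weighted_mat_sym weighted_mat_traceless)
  also have "tensor_inner S traceless_id = W * (\<beta> * real CARD('n))"
    by (subst tensor_inner_commute) (simp add: S_def W_def traceless_id_weighted_outer)
  also have "tensor_inner S (jordan_tensor A) = \<alpha> * mat_inner A A"
    by (subst tensor_inner_commute) (simp add: S_def A_def jordan_tensor_weighted_outer)
  also have "tensor_inner (jordan_tensor A) (jordan_tensor A) = lam * mat_inner A A"
    unfolding lam_def A_def by (intro jordan_tensor_norm weighted_mat_sym weighted_mat_traceless)
  also have "(\<alpha> * mat_inner A A)\<^sup>2 / (lam * mat_inner A A) = \<alpha>\<^sup>2 / lam * mat_inner A A"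
    by (cases "mat_inner A A = 0") (simp_all add: power2_eq_square)
  finally have "(W * (\<beta> * real CARD('n)))\<^sup>2 / D + \<alpha>\<^sup>2 / lam * mat_inner A A \<le> tensor_inner S S"
    by (simp add: D_def traceless_id_norm)
  moreover have "(W * (\<beta> * real CARD('n)))\<^sup>2 / D = (\<beta> * real CARD('n))\<^sup>2 / D * (\<Sum>p\<in>C. \<Sum>q\<in>C. w p * w q)"
    by (simp add: W_def power_mult_distrib power2_eq_square sum_product)
  ultimately have "0 \<le> (\<Sum>p\<in>C. \<Sum>q\<in>C. w p * w q * (mat_inner (X p) (X q))\<^sup>2)
      - \<alpha>\<^sup>2 / lam * (\<Sum>p\<in>C. \<Sum>q\<in>C. w p * w q * mat_inner (X p) (X q))
      - (\<beta> * real CARD('n))\<^sup>2 / D * (\<Sum>p\<in>C. \<Sum>q\<in>C. w p * w q)"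
    by (simp add: S_def A_def weighted_outer_norm mat_inner_weighted_mat)
  then show ?thesis
    unfolding b[symmetric] c[symmetric] lam_def D_def right_diff_distrib sum_subtractf sum_distrib_left
    by (simp add: mult_ac)
qed

lemma gram_sums_nonneg:
  assumes b: "\<alpha>\<^sup>2 / ((real CARD('n) + 2) / 4 - 2 / real CARD('n)) = b"
    and c: "(\<beta> * real CARD('n))\<^sup>2 / (real CARD('n) * (real CARD('n) + 1) / 2 - 1) = c"
  shows "0 \<le> (\<Sum>p\<in>C. \<Sum>q\<in>C. mat_inner (X p) (X q))"
    and "0 \<le> (\<Sum>p\<in>C. \<Sum>q\<in>C. (mat_inner (X p) (X q))\<^sup>2 - b * mat_inner (X p) (X q) - c)"
    and "0 \<le> (\<Sum>p\<in>C. \<Sum>q\<in>C. mat_inner (X p) (X q) *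
           ((mat_inner (X p) (X q))\<^sup>2 - b * mat_inner (X p) (X q) - c))"
proof -
  show "0 \<le> (\<Sum>p\<in>C. \<Sum>q\<in>C. mat_inner (X p) (X q))"
    using mat_inner_weighted_mat[of C X "\<lambda>_. 1"] mat_inner_self_nonneg[of "weighted_mat C X (\<lambda>_. 1)"]
    by simp
  show "0 \<le> (\<Sum>p\<in>C. \<Sum>q\<in>C. (mat_inner (X p) (X q))\<^sup>2 - b * mat_inner (X p) (X q) - c)"
    using gram_kernel_nonneg[OF b c, of "\<lambda>_. 1"] by simp
  \<comment> \<open>Summing over the weights \<open>w p = X p i j\<close> multiplies the kernel by the Gram kernel.\<close>
  have "0 \<le> (\<Sum>i\<in>UNIV. \<Sum>j\<in>UNIV. \<Sum>p\<in>C. \<Sum>q\<in>C. X p i j * X q i j *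
      ((mat_inner (X p) (X q))\<^sup>2 - b * mat_inner (X p) (X q) - c))"
    using gram_kernel_nonneg[OF b c, of "\<lambda>p. X p i j" for i j] by (simp add: sum_nonneg)
  also have "\<dots> = (\<Sum>p\<in>C. \<Sum>q\<in>C. \<Sum>i\<in>UNIV. \<Sum>j\<in>UNIV. X p i j * X q i j *
      ((mat_inner (X p) (X q))\<^sup>2 - b * mat_inner (X p) (X q) - c))"
    by (simp only: sum.swap[where A=UNIV and B=C])
  finally show "0 \<le> (\<Sum>p\<in>C. \<Sum>q\<in>C. mat_inner (X p) (X q) *
      ((mat_inner (X p) (X q))\<^sup>2 - b * mat_inner (X p) (X q) - c))"
    unfolding mat_inner_def[of "X p" "X q" for p q] sum_distrib_right .
qed

end

section \<open>Principal angles and projection matrices\<close>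

definition orthonormal :: "('a::euclidean_space) set \<Rightarrow> bool" where
  "orthonormal B \<longleftrightarrow> finite B \<and> pairwise orthogonal B \<and> (\<forall>x\<in>B. norm x = 1)"

lemma orthonormal_inner:
  "orthonormal B \<Longrightarrow> b \<in> B \<Longrightarrow> c \<in> B \<Longrightarrow> b \<bullet> c = (if b = c then 1 else 0)"
  unfolding orthonormal_def pairwise_def orthogonal_def
  by (auto simp: norm_eq_1)

lemma orthonormal_insert:
  fixes u :: "'a::euclidean_space"
  assumes B: "orthonormal B" "\<forall>b\<in>B. b \<bullet> u = 0" and u: "norm u = 1"
  shows "orthonormal (insert u B)" "u \<notin> B"
proof -
  have uu: "u \<bullet> u = 1" using u norm_eq_1 by blast
  show "u \<notin> B" using B(2) uu by force
  show "orthonormal (insert u B)" using B u unfolding orthonormal_def pairwise_def orthogonal_def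
    by (auto simp: inner_commute)
qed

lemma orthonormal_proj_orthogonal:
  assumes "orthonormal B" "c \<in> B"
  shows "c \<bullet> (x - (\<Sum>b\<in>B. (b \<bullet> x) *\<^sub>R b)) = 0"
proof -
  have fin: "finite B" using assms(1) orthonormal_def by blast
  have "c \<bullet> (\<Sum>b\<in>B. (b \<bullet> x) *\<^sub>R b) = (\<Sum>b\<in>B. (b \<bullet> x) * (c \<bullet> b))"
    by (simp add: inner_sum_right)
  also have "\<dots> = (\<Sum>b\<in>B. if c = b then (b \<bullet> x) else 0)"
    by (intro sum.cong refl) (simp add: orthonormal_inner[OF assms(1) assms(2)])
  also have "\<dots> = c \<bullet> x" using fin assms(2) by (simp add: sum.delta)
  finally show ?thesis by (simp add: inner_diff_right)
qed

lemma orthonormal_proj_unique: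
  assumes "orthonormal B" "orthonormal B'" "span B = span B'"
  shows "(\<Sum>b\<in>B. (b \<bullet> x) *\<^sub>R b) = (\<Sum>b\<in>B'. (b \<bullet> x) *\<^sub>R b)"
proof -
  define y where "y = (\<Sum>b\<in>B. (b \<bullet> x) *\<^sub>R b)"
  define y' where "y' = (\<Sum>b\<in>B'. (b \<bullet> x) *\<^sub>R b)"
  have "y \<in> span B" "y' \<in> span B'"
    unfolding y_def y'_def by (intro span_sum span_scale span_base, assumption)+
  then have z: "y - y' \<in> span B"
    using assms(3) by (simp add: span_diff)
  have o1: "orthogonal (x - y) (y - y')"
    by (rule orthogonal_to_span[OF z])
      (metis assms(1) orthonormal_proj_orthogonal y_def orthogonal_def inner_commute)
  have z': "y - y' \<in> span B'" using z assms(3) by simp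
  have o2: "orthogonal (x - y') (y - y')"
    by (rule orthogonal_to_span[OF z'])
      (metis assms(2) orthonormal_proj_orthogonal y'_def orthogonal_def inner_commute)
  have "(y - y') \<bullet> (y - y') = (y - y') \<bullet> ((x - y') - (x - y))"
    by (simp add: algebra_simps)
  also have "\<dots> = 0"
    using o1 o2 unfolding orthogonal_def by (simp add: inner_diff_right inner_commute)
  finally have "y - y' = 0" by simp
  then show ?thesis unfolding y_def y'_def by simp
qed

definition orthonormal_basis :: "'a::euclidean_space set \<Rightarrow> 'a set" where
  "orthonormal_basis p = (SOME B. B \<subseteq> p \<and> orthonormal B \<and> card B = dim p \<and> span B = p)"

lemma orthonormal_basis_spec:
  assumes "subspace p"
  shows "orthonormal_basis p \<subseteq> p" "orthonormal (orthonormal_basis p)"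
    "card (orthonormal_basis p) = dim p" "span (orthonormal_basis p) = p"
proof -
  have "\<exists>B. B \<subseteq> p \<and> orthonormal B \<and> card B = dim p \<and> span B = p"
    using orthonormal_basis_subspace[OF assms] unfolding orthonormal_def
    by (metis independent_imp_finite)
  from someI_ex[OF this, folded orthonormal_basis_def] show
    "orthonormal_basis p \<subseteq> p" "orthonormal (orthonormal_basis p)"
    "card (orthonormal_basis p) = dim p" "span (orthonormal_basis p) = p"
    by auto
qed

lemma span_insert_hyperplane_section:
  fixes u :: "'a::euclidean_space"
  assumes sp: "subspace p" and u: "u \<in> p" "norm u = 1"
  shows "span (insert u (p \<inter> {x. x \<bullet> u = 0})) = p"
proof
  show "span (insert u (p \<inter> {x. x \<bullet> u = 0})) \<subseteq> p"
    using sp u by (intro span_minimal) auto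
  show "p \<subseteq> span (insert u (p \<inter> {x. x \<bullet> u = 0}))"
  proof
    fix x assume x: "x \<in> p"
    have uu: "u \<bullet> u = 1" using u norm_eq_1 by blast
    have "x - (x \<bullet> u) *\<^sub>R u \<in> p \<inter> {x. x \<bullet> u = 0}"
      using x u sp uu by (simp add: subspace_diff subspace_scale inner_diff_left)
    then have a: "x - (x \<bullet> u) *\<^sub>R u \<in> span (insert u (p \<inter> {x. x \<bullet> u = 0}))"
      by (intro span_base) auto
    have b: "(x \<bullet> u) *\<^sub>R u \<in> span (insert u (p \<inter> {x. x \<bullet> u = 0}))"
      by (intro span_scale span_base) auto
    have "x = (x - (x \<bullet> u) *\<^sub>R u) + (x \<bullet> u) *\<^sub>R u" by simp
    then show "x \<in> span (insert u (p \<inter> {x. x \<bullet> u = 0}))"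
      using span_add[OF a b] by metis
  qed
qed

lemma dim_hyperplane_section:
  fixes u :: "'a::euclidean_space"
  assumes sp: "subspace p" and u: "u \<in> p" "norm u = 1"
  shows "dim p = dim (p \<inter> {x. x \<bullet> u = 0}) + 1"
proof -
  have "subspace (p \<inter> {x. x \<bullet> u = 0})"
    using sp by (simp add: subspace_inter subspace_hyperplane2)
  moreover have "u \<bullet> u = 1"
    using u norm_eq_1 by blast
  ultimately have "u \<notin> span (p \<inter> {x. x \<bullet> u = 0})"
    by (simp add: span_eq_iff[THEN iffD2])
  moreover have "dim p = dim (span (insert u (p \<inter> {x. x \<bullet> u = 0})))"
    using span_insert_hyperplane_section[OF sp u] by simp
  ultimately show ?thesis
    unfolding dim_span dim_insert by simp
qed

lemma span_insert_basis_hyperplane_section: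
  fixes u :: "'a::euclidean_space"
  assumes sp: "subspace p" and u: "u \<in> p" "norm u = 1"
    and B: "B \<subseteq> p \<inter> {x. x \<bullet> u = 0}" "span B = p \<inter> {x. x \<bullet> u = 0}"
  shows "span (insert u B) = p"
proof
  show "span (insert u B) \<subseteq> p" using sp u B by (intro span_minimal) auto
  have "insert u (p \<inter> {x. x \<bullet> u = 0}) \<subseteq> span (insert u B)"
    using B(2) span_mono[of B "insert u B"] by (auto intro: span_base)
  then have "span (insert u (p \<inter> {x. x \<bullet> u = 0})) \<subseteq> span (insert u B)"
    by (intro span_minimal) auto
  then show "p \<subseteq> span (insert u B)" using span_insert_hyperplane_section[OF sp u] by simp
qed

lemma first_order_term_vanishes:
  fixes a c :: real
  assumes H: "\<And>e. (a + e * c)\<^sup>2 \<le> a\<^sup>2 * (1 + e\<^sup>2)"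
  shows "c = 0"
proof (rule ccontr)
  assume c: "c \<noteq> 0"
  show False
  proof (cases "a = 0")
    case True
    then show False using H[of 1] c by simp
  next
    case False
    define e where "e = a * c / (a\<^sup>2 + 1)"
    have pos: "a\<^sup>2 + 1 > 0" by (simp add: add_nonneg_pos)
    have "(a + e * c)\<^sup>2 \<le> a\<^sup>2 * (1 + e\<^sup>2)" by (rule H)
    then have "2 * e * a * c + e\<^sup>2 * c\<^sup>2 \<le> e\<^sup>2 * a\<^sup>2" by (simp add: power2_eq_square algebra_simps)
    then have "2 * (a * c)\<^sup>2 / (a\<^sup>2 + 1) + e\<^sup>2 * c\<^sup>2 \<le> (a * c)\<^sup>2 / (a\<^sup>2 + 1) * (a\<^sup>2 / (a\<^sup>2 + 1))"
      unfolding e_def by (simp add: power2_eq_square field_simps)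
    moreover have "(a * c)\<^sup>2 / (a\<^sup>2 + 1) * (a\<^sup>2 / (a\<^sup>2 + 1)) < (a * c)\<^sup>2 / (a\<^sup>2 + 1)"
    proof -
      have h1: "(a * c)\<^sup>2 / (a\<^sup>2 + 1) > 0" using c False pos by simp
      have h2: "a\<^sup>2 / (a\<^sup>2 + 1) < 1" using pos by simp
      show ?thesis using mult_strict_left_mono[OF h2 h1] by simp
    qed
    moreover have "(a * c)\<^sup>2 / (a\<^sup>2 + 1) > 0" using c False pos by simp
    moreover have "e\<^sup>2 * c\<^sup>2 \<ge> 0" by simp
    ultimately show False by linarith
  qed
qed

lemma principal_vectors_maximal:
  fixes u v :: "'a::euclidean_space"
  assumes H: "\<forall>x\<in>p. \<forall>y\<in>q. norm x = 1 \<longrightarrow> norm y = 1 \<longrightarrow> arccos \<bar>u \<bullet> v\<bar> \<le> arccos \<bar>x \<bullet> y\<bar>"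
    and uv: "norm u = 1" "norm v = 1"
    and x: "x \<in> p" "norm x = 1" and y: "y \<in> q" "norm y = 1"
  shows "\<bar>x \<bullet> y\<bar> \<le> \<bar>u \<bullet> v\<bar>"
proof (rule ccontr)
  assume "\<not> ?thesis"
  then have lt: "\<bar>u \<bullet> v\<bar> < \<bar>x \<bullet> y\<bar>" by simp
  have "\<bar>x \<bullet> y\<bar> \<le> 1" using Cauchy_Schwarz_ineq2[of x y] x y by simp
  then have "arccos \<bar>x \<bullet> y\<bar> < arccos \<bar>u \<bullet> v\<bar>"
    using lt by (intro arccos_less_arccos) auto
  then show False using H x y by force
qed

text \<open>Tilting \<open>u\<close> towards a unit vector \<open>b \<in> p\<close> orthogonal to it must not increase
  \<open>\<bar>u \<bullet> v\<bar>\<close>; to first order this forces \<open>b \<bullet> v = 0\<close>.\<close>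

lemma principal_vectors_cross_orthogonal:
  fixes u v b :: "'a::euclidean_space"
  assumes sp: "subspace p"
    and H: "\<forall>x\<in>p. \<forall>y\<in>q. norm x = 1 \<longrightarrow> norm y = 1 \<longrightarrow> arccos \<bar>u \<bullet> v\<bar> \<le> arccos \<bar>x \<bullet> y\<bar>"
    and u: "u \<in> p" "norm u = 1" and v: "v \<in> q" "norm v = 1"
    and b: "b \<in> p" "norm b = 1" "b \<bullet> u = 0"
  shows "b \<bullet> v = 0"
proof (rule first_order_term_vanishes)
  fix e :: real
  define w where "w = u + e *\<^sub>R b"
  have "w \<in> p"
    unfolding w_def using sp u b by (simp add: subspace_add subspace_scale)
  have nw2: "(norm w)\<^sup>2 = 1 + e\<^sup>2"
    unfolding w_def power2_norm_eq_inner using u b norm_eq_1[of u] norm_eq_1[of b]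
    by (simp add: inner_add_left inner_add_right inner_commute power2_eq_square)
  have "0 < (norm w)\<^sup>2"
    unfolding nw2 by (simp add: add_pos_nonneg)
  then have "0 < norm w"
    by simp
  have "\<bar>(inverse (norm w) *\<^sub>R w) \<bullet> v\<bar> \<le> \<bar>u \<bullet> v\<bar>"
    by (rule principal_vectors_maximal[OF H u(2) v(2)])
      (use \<open>w \<in> p\<close> sp \<open>0 < norm w\<close> v in \<open>auto simp: subspace_scale\<close>)
  then have "\<bar>w \<bullet> v\<bar> \<le> \<bar>u \<bullet> v\<bar> * norm w"
    using \<open>0 < norm w\<close> by (simp add: field_simps abs_mult)
  then have "(w \<bullet> v)\<^sup>2 \<le> (\<bar>u \<bullet> v\<bar> * norm w)\<^sup>2"
    by (metis abs_ge_zero power2_abs power_mono)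
  also have "\<dots> = (u \<bullet> v)\<^sup>2 * (1 + e\<^sup>2)"
    by (simp add: power_mult_distrib nw2)
  finally show "((u \<bullet> v) + e * (b \<bullet> v))\<^sup>2 \<le> (u \<bullet> v)\<^sup>2 * (1 + e\<^sup>2)"
    unfolding w_def by (simp add: inner_add_left)
qed

lemma principal_vectors_exist:
  fixes p q :: "'a::euclidean_space set"
  assumes "subspace p" "subspace q" "p \<noteq> {0}" "q \<noteq> {0}"
  obtains u v where "u \<in> p" "norm u = 1" "v \<in> q" "norm v = 1"
    "\<forall>x\<in>p. \<forall>y\<in>q. norm x = 1 \<longrightarrow> norm y = 1 \<longrightarrow> arccos \<bar>u \<bullet> v\<bar> \<le> arccos \<bar>x \<bullet> y\<bar>"
proof -
  have unit_ex: "\<exists>x\<in>S. norm x = 1" if S: "subspace S" "S \<noteq> {0}" for S :: "'a set"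
  proof -
    obtain x where "x \<in> S" "x \<noteq> 0"
      using S(2) subspace_0[OF S(1)] by blast
    then have "inverse (norm x) *\<^sub>R x \<in> S" "norm (inverse (norm x) *\<^sub>R x) = 1"
      using S(1) subspace_scale by auto
    then show ?thesis
      by blast
  qed
  define K where "K = (p \<inter> sphere 0 1) \<times> (q \<inter> sphere (0::'a) 1)"
  have "compact K"
    unfolding K_def using assms(1,2) closed_subspace by (intro compact_Times closed_Int_compact) auto
  moreover have "K \<noteq> {}"
    unfolding K_def using unit_ex[OF assms(1,3)] unit_ex[OF assms(2,4)] by auto
  moreover have "continuous_on K (\<lambda>z. \<bar>fst z \<bullet> snd z\<bar>)"
    by (intro continuous_intros)
  ultimately have "\<exists>z\<in>K. \<forall>y\<in>K. \<bar>fst y \<bullet> snd y\<bar> \<le> \<bar>fst z \<bullet> snd z\<bar>"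
    by (rule continuous_attains_sup)
  then obtain z where z: "z \<in> K" and zmax: "\<And>y. y \<in> K \<Longrightarrow> \<bar>fst y \<bullet> snd y\<bar> \<le> \<bar>fst z \<bullet> snd z\<bar>"
    by blast
  define u v where "u = fst z" and "v = snd z"
  have u: "u \<in> p" "norm u = 1" and v: "v \<in> q" "norm v = 1"
    using z unfolding K_def u_def v_def by auto
  have "\<bar>u \<bullet> v\<bar> \<le> 1"
    using Cauchy_Schwarz_ineq2[of u v] u v by simp
  have "\<forall>x\<in>p. \<forall>y\<in>q. norm x = 1 \<longrightarrow> norm y = 1 \<longrightarrow> arccos \<bar>u \<bullet> v\<bar> \<le> arccos \<bar>x \<bullet> y\<bar>"
  proof (intro ballI impI)
    fix x y
    assume "x \<in> p" "y \<in> q" "norm x = 1" "norm y = 1"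
    then have "\<bar>x \<bullet> y\<bar> \<le> \<bar>u \<bullet> v\<bar>"
      using zmax[of "(x, y)"] unfolding K_def u_def v_def by simp
    then show "arccos \<bar>u \<bullet> v\<bar> \<le> arccos \<bar>x \<bullet> y\<bar>"
      using \<open>\<bar>u \<bullet> v\<bar> \<le> 1\<close> by (intro arccos_le_arccos) auto
  qed
  then show ?thesis
    by (rule that[OF u v])
qed

lemma principal_angles_exist:
  fixes p q :: "'a::euclidean_space set"
  assumes "subspace p" "subspace q" "dim p = d" "dim q = d"
  shows "\<exists>\<theta>s. principal_angles p q \<theta>s"
  using assms
proof (induction d arbitrary: p q)
  case 0
  then have "p = {0}" "q = {0}"
    using subspace_0[of p] subspace_0[of q] by auto
  then show ?case
    by (blast intro: principal_angles.Nil)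
next
  case (Suc d)
  then have "p \<noteq> {0}" "q \<noteq> {0}"
    using dim_singleton[of 0] by auto
  then obtain u v where u: "u \<in> p" "norm u = 1" and v: "v \<in> q" "norm v = 1"
    and H: "\<forall>x\<in>p. \<forall>y\<in>q. norm x = 1 \<longrightarrow> norm y = 1 \<longrightarrow> arccos \<bar>u \<bullet> v\<bar> \<le> arccos \<bar>x \<bullet> y\<bar>"
    by (rule principal_vectors_exist[OF Suc.prems(1,2)])
  have "subspace (p \<inter> {x. x \<bullet> u = 0})" "subspace (q \<inter> {y. y \<bullet> v = 0})"
    using Suc.prems by (simp_all add: subspace_inter subspace_hyperplane2)
  moreover have "dim (p \<inter> {x. x \<bullet> u = 0}) = d" "dim (q \<inter> {y. y \<bullet> v = 0}) = d"
    using dim_hyperplane_section[OF Suc.prems(1) u] dim_hyperplane_section[OF Suc.prems(2) v] Suc.prems(3,4)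
    by simp_all
  ultimately obtain \<theta>s where "principal_angles (p \<inter> {x. x \<bullet> u = 0}) (q \<inter> {y. y \<bullet> v = 0}) \<theta>s"
    using Suc.IH by blast
  then have "principal_angles p q (arccos \<bar>u \<bullet> v\<bar> # \<theta>s)"
    by (intro principal_angles.Cons[OF u(1) v(1) u(2) v(2) refl H])
  then show ?case
    by blast
qed

definition proj_mat :: "(real^'n) set \<Rightarrow> 'n \<Rightarrow> 'n \<Rightarrow> real" where
  "proj_mat p i j = (\<Sum>b\<in>orthonormal_basis p. b$i * b$j)"

text \<open>The entries of the projection matrix do not depend on the orthonormal basis, because
  \<open>proj_mat p i j\<close> is the \<open>i\<close>-th coordinate of the orthogonal projection of \<open>axis j 1\<close>.\<close>
lemma proj_mat_eq_basis:
  assumes "subspace p" "orthonormal B" "span B = p"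
  shows "proj_mat p i j = (\<Sum>b\<in>B. b$i * b$j)"
proof -
  have "(\<Sum>b\<in>orthonormal_basis p. (b \<bullet> axis j 1) *\<^sub>R b) = (\<Sum>b\<in>B. (b \<bullet> axis j 1) *\<^sub>R b)"
    by (rule orthonormal_proj_unique) (use orthonormal_basis_spec[OF assms(1)] assms in auto)
  then have "(\<Sum>b\<in>orthonormal_basis p. (b \<bullet> axis j 1) *\<^sub>R b) $ i = (\<Sum>b\<in>B. (b \<bullet> axis j 1) *\<^sub>R b) $ i"
    by simp
  then show ?thesis
    unfolding proj_mat_def by (simp add: inner_axis mult.commute)
qed

lemma mat_inner_proj_mat_basis:
  assumes "subspace p" "orthonormal B" "span B = p" "subspace q" "orthonormal C" "span C = q"
  shows "mat_inner (proj_mat p) (proj_mat q) = (\<Sum>b\<in>B. \<Sum>c\<in>C. (b \<bullet> c)\<^sup>2)"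
proof -
  have "mat_inner (proj_mat p) (proj_mat q) =
      (\<Sum>i\<in>UNIV. \<Sum>j\<in>UNIV. (\<Sum>b\<in>B. b$i * b$j) * (\<Sum>c\<in>C. c$i * c$j))"
    unfolding mat_inner_def using proj_mat_eq_basis[OF assms(1-3)] proj_mat_eq_basis[OF assms(4-6)] by simp
  also have "\<dots> = (\<Sum>b\<in>B. \<Sum>c\<in>C. \<Sum>i\<in>UNIV. \<Sum>j\<in>UNIV. (b$i * c$i) * (b$j * c$j))"
    unfolding sum_product
    by (simp only: sum.swap[where A="UNIV::'n set" and B=B] sum.swap[where A="UNIV::'n set" and B=C])
      (simp add: algebra_simps)
  also have "\<dots> = (\<Sum>b\<in>B. \<Sum>c\<in>C. (b \<bullet> c)\<^sup>2)"
    unfolding inner_vec_def power2_eq_square sum_product by simp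
  finally show ?thesis .
qed

text \<open>Extending orthonormal bases of the two orthogonal complements by the principal vectors
  \<open>u\<close> and \<open>v\<close> gives bases of \<open>p\<close> and \<open>q\<close> in which the only cross term involving \<open>u\<close> or \<open>v\<close>
  is \<open>u \<bullet> v\<close>.\<close>
lemma mat_inner_proj_mat_principal_split:
  fixes u v :: "real^'n"
  assumes sp: "subspace p" "subspace q" and u: "u \<in> p" "norm u = 1" and v: "v \<in> q" "norm v = 1"
    and H: "\<forall>x\<in>p. \<forall>y\<in>q. norm x = 1 \<longrightarrow> norm y = 1 \<longrightarrow> arccos \<bar>u \<bullet> v\<bar> \<le> arccos \<bar>x \<bullet> y\<bar>"
  defines "p' \<equiv> p \<inter> {x. x \<bullet> u = 0}" and "q' \<equiv> q \<inter> {y. y \<bullet> v = 0}"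
  shows "mat_inner (proj_mat p) (proj_mat q) = (u \<bullet> v)\<^sup>2 + mat_inner (proj_mat p') (proj_mat q')"
proof -
  have sp': "subspace p'" "subspace q'"
    unfolding p'_def q'_def using sp by (simp_all add: subspace_inter subspace_hyperplane2)
  define B where "B = orthonormal_basis p'"
  define C where "C = orthonormal_basis q'"
  note Bp = orthonormal_basis_spec[OF sp'(1), folded B_def]
  note Cp = orthonormal_basis_spec[OF sp'(2), folded C_def]
  have Bu: "\<forall>b\<in>B. b \<bullet> u = 0" using Bp(1) unfolding p'_def by auto
  have Cv: "\<forall>c\<in>C. c \<bullet> v = 0" using Cp(1) unfolding q'_def by auto
  have oB: "orthonormal (insert u B)" "u \<notin> B" using orthonormal_insert[OF Bp(2) Bu u(2)] by auto
  have oC: "orthonormal (insert v C)" "v \<notin> C" using orthonormal_insert[OF Cp(2) Cv v(2)] by auto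
  have spB: "span (insert u B) = p"
    by (rule span_insert_basis_hyperplane_section) (use sp u Bp in \<open>auto simp: p'_def\<close>)
  have spC: "span (insert v C) = q"
    by (rule span_insert_basis_hyperplane_section) (use sp v Cp in \<open>auto simp: q'_def\<close>)
  have H': "\<forall>y\<in>q. \<forall>x\<in>p. norm y = 1 \<longrightarrow> norm x = 1 \<longrightarrow> arccos \<bar>v \<bullet> u\<bar> \<le> arccos \<bar>y \<bullet> x\<bar>"
    using H by (fastforce simp: inner_commute)
  have Bv: "b \<bullet> v = 0" if "b \<in> B" for b
    using principal_vectors_cross_orthogonal[OF sp(1) H u v] that Bp Bu
    by (auto simp: p'_def orthonormal_def)
  have Cu: "u \<bullet> c = 0" if "c \<in> C" for c
    using principal_vectors_cross_orthogonal[OF sp(2) H' v u] that Cp Cv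
    by (auto simp: q'_def orthonormal_def inner_commute)
  have "mat_inner (proj_mat p) (proj_mat q) = (\<Sum>b\<in>insert u B. \<Sum>c\<in>insert v C. (b \<bullet> c)\<^sup>2)"
    by (rule mat_inner_proj_mat_basis) (use sp oB oC spB spC in auto)
  also have "\<dots> = (u \<bullet> v)\<^sup>2 + (\<Sum>b\<in>B. \<Sum>c\<in>C. (b \<bullet> c)\<^sup>2)"
    using Bp(2) Cp(2) oB(2) oC(2) Bv Cu by (simp add: sum.insert orthonormal_def)
  also have "(\<Sum>b\<in>B. \<Sum>c\<in>C. (b \<bullet> c)\<^sup>2) = mat_inner (proj_mat p') (proj_mat q')"
    by (rule mat_inner_proj_mat_basis[symmetric]) (use sp' Bp Cp in auto)
  finally show ?thesis .
qed

lemma principal_angles_proj_mat_inner: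
  fixes p q :: "(real^'n) set"
  assumes "principal_angles p q \<theta>s" "subspace p" "subspace q"
  shows "length \<theta>s = dim p \<and> mat_inner (proj_mat p) (proj_mat q) = sum_list (map (\<lambda>\<theta>. (cos \<theta>)\<^sup>2) \<theta>s)"
  using assms
proof (induction rule: principal_angles.induct)
  case (Nil p q)
  then show ?case
    using mat_inner_proj_mat_basis[of p "{}" q "{}"] by (simp add: orthonormal_def)
next
  case (Cons u p v q \<theta> \<theta>s)
  have "subspace (p \<inter> {x. x \<bullet> u = 0})" "subspace (q \<inter> {y. y \<bullet> v = 0})"
    using Cons.prems by (simp_all add: subspace_inter subspace_hyperplane2)
  note IH = Cons.IH[OF this]
  have "\<bar>u \<bullet> v\<bar> \<le> 1"
    using Cauchy_Schwarz_ineq2[of u v] Cons.hyps by simp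
  then have "(cos \<theta>)\<^sup>2 = (u \<bullet> v)\<^sup>2"
    using Cons.hyps by (simp add: cos_arccos)
  then show ?case
    using IH dim_hyperplane_section[OF Cons.prems(1) Cons.hyps(1,3)]
      mat_inner_proj_mat_principal_split[OF Cons.prems Cons.hyps(1,3,2,4) Cons.hyps(6)[unfolded Cons.hyps(5)]]
    by simp
qed

lemma sum_list_sin_sq:
  "sum_list (map (\<lambda>\<theta>. (sin \<theta>)\<^sup>2) \<theta>s) = real (length \<theta>s) - sum_list (map (\<lambda>\<theta>. (cos \<theta>)\<^sup>2) \<theta>s)"
  by (induction \<theta>s) (auto simp: sin_squared_eq)

lemma chordal_dist_proj_mat:
  fixes p q :: "(real^'n) set"
  assumes "p \<in> grassmannian m" "q \<in> grassmannian m"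
  shows "chordal_dist p q = sqrt (real m - mat_inner (proj_mat p) (proj_mat q))"
proof -
  have sp: "subspace p" "dim p = m" "subspace q" "dim q = m"
    using assms unfolding grassmannian_def by auto
  then have "\<exists>\<theta>s. principal_angles p q \<theta>s"
    by (intro principal_angles_exist) auto
  then have "principal_angles p q (SOME \<theta>s. principal_angles p q \<theta>s)"
    by (rule someI_ex)
  from principal_angles_proj_mat_inner[OF this sp(1,3)] show ?thesis
    unfolding chordal_dist_def sum_list_sin_sq using sp(2) by simp
qed

lemma proj_mat_sym: "proj_mat p i j = proj_mat p j i"
  unfolding proj_mat_def by (simp add: mult.commute)

lemma proj_mat_idem:
  fixes p :: "(real^'n) set"
  assumes "subspace p"
  shows "(\<Sum>j\<in>UNIV. proj_mat p i j * proj_mat p j l) = proj_mat p i l"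
proof -
  define B where "B = orthonormal_basis p"
  have B: "orthonormal B"
    unfolding B_def by (rule orthonormal_basis_spec[OF assms])
  have "(\<Sum>j\<in>UNIV. proj_mat p i j * proj_mat p j l) = (\<Sum>j\<in>UNIV. \<Sum>b\<in>B. \<Sum>c\<in>B. (b$i * c$l) * (b$j * c$j))"
    unfolding proj_mat_def B_def sum_product by (simp add: algebra_simps)
  also have "\<dots> = (\<Sum>b\<in>B. \<Sum>c\<in>B. \<Sum>j\<in>UNIV. (b$i * c$l) * (b$j * c$j))"
    by (simp only: sum.swap[where A="UNIV::'n set" and B=B])
  also have "\<dots> = (\<Sum>b\<in>B. \<Sum>c\<in>B. b$i * c$l * (b \<bullet> c))"
    unfolding inner_vec_def sum_distrib_left by simp
  also have "\<dots> = (\<Sum>b\<in>B. \<Sum>c\<in>B. if b = c then b$i * c$l else 0)"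
    by (intro sum.cong refl) (simp add: orthonormal_inner[OF B])
  also have "\<dots> = proj_mat p i l"
    unfolding proj_mat_def B_def[symmetric] using B by (simp add: sum.delta orthonormal_def)
  finally show ?thesis .
qed

lemma proj_mat_trace:
  fixes p :: "(real^'n) set"
  assumes "subspace p"
  shows "(\<Sum>i\<in>UNIV. proj_mat p i i) = real (dim p)"
proof -
  note B = orthonormal_basis_spec[OF assms]
  have "(\<Sum>i\<in>UNIV. proj_mat p i i) = (\<Sum>b\<in>orthonormal_basis p. b \<bullet> b)"
    unfolding proj_mat_def inner_vec_def by (subst sum.swap) simp
  also have "\<dots> = card (orthonormal_basis p)"
    using B(2) unfolding orthonormal_def by (simp add: norm_eq_1)
  finally show ?thesis
    using B(3) by simp
qed

definition centered_proj :: "nat \<Rightarrow> (real^'n) set \<Rightarrow> 'n \<Rightarrow> 'n \<Rightarrow> real" where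
  "centered_proj m p i j = proj_mat p i j - real m / real CARD('n) * kdelta i j"

lemma centered_proj_sym: "centered_proj m p i j = centered_proj m p j i"
  unfolding centered_proj_def by (simp add: proj_mat_sym kdelta_def)

lemma centered_proj_traceless:
  assumes "p \<in> grassmannian m"
  shows "(\<Sum>i\<in>UNIV. centered_proj m p i i) = 0"
  using assms proj_mat_trace[of p]
  unfolding centered_proj_def grassmannian_def by (simp add: sum_subtractf kdelta_def)

lemma centered_proj_square:
  fixes p :: "(real^'n) set" and m :: nat
  assumes sp: "subspace p"
  defines "k \<equiv> real m / real CARD('n)"
  shows "(\<Sum>j\<in>UNIV. centered_proj m p i j * centered_proj m p j l) =
    (1 - 2 * k) * centered_proj m p i l + (k - k\<^sup>2) * kdelta i l"
proof -
  have "(\<Sum>j\<in>UNIV. centered_proj m p i j * centered_proj m p j l) =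
      (\<Sum>j\<in>UNIV. proj_mat p i j * proj_mat p j l) - k * proj_mat p i l - k * proj_mat p i l
        + k * k * kdelta i l"
    unfolding centered_proj_def k_def
    by (simp add: algebra_simps sum.distrib sum_subtractf sum_distrib_left[symmetric] kdelta_simps
        proj_mat_sym[of p l i])
  also have "\<dots> = (1 - 2 * k) * centered_proj m p i l + (k - k\<^sup>2) * kdelta i l"
    unfolding proj_mat_idem[OF sp] centered_proj_def k_def by (simp add: algebra_simps power2_eq_square)
  finally show ?thesis .
qed

lemma mat_inner_centered_proj:
  fixes p q :: "(real^'n) set"
  assumes "p \<in> grassmannian m" "q \<in> grassmannian m"
  shows "mat_inner (centered_proj m p) (centered_proj m q) =
    mat_inner (proj_mat p) (proj_mat q) - (real m)\<^sup>2 / real CARD('n)"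
proof -
  have sp: "subspace p" "dim p = m" "subspace q" "dim q = m"
    using assms unfolding grassmannian_def by auto
  define k where "k = real m / real CARD('n)"
  have "mat_inner (centered_proj m p) (centered_proj m q) = mat_inner (proj_mat p) (proj_mat q)
      - k * (\<Sum>i\<in>UNIV. proj_mat q i i) - k * (\<Sum>i\<in>UNIV. proj_mat p i i) + k * k * real CARD('n)"
    unfolding mat_inner_def centered_proj_def k_def[symmetric]
    by (simp add: algebra_simps sum.distrib sum_subtractf sum_distrib_left[symmetric] kdelta_simps)
  also have "\<dots> = mat_inner (proj_mat p) (proj_mat q) - (real m)\<^sup>2 / real CARD('n)"
    unfolding proj_mat_trace[OF sp(1)] proj_mat_trace[OF sp(3)] sp(2) sp(4) k_def
    by (simp add: field_simps power2_eq_square)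
  finally show ?thesis .
qed

lemma mat_inner_centered_proj_self:
  fixes p :: "(real^'n) set"
  assumes "p \<in> grassmannian m"
  shows "mat_inner (centered_proj m p) (centered_proj m p) =
    real m - (real m)\<^sup>2 / real CARD('n)"
proof -
  have sp: "subspace p" "dim p = m"
    using assms unfolding grassmannian_def by auto
  have "mat_inner (proj_mat p) (proj_mat p) = (\<Sum>i\<in>UNIV. \<Sum>j\<in>UNIV. proj_mat p i j * proj_mat p j i)"
    unfolding mat_inner_def by (simp add: proj_mat_sym[of p _ _])
  also have "\<dots> = real m"
    using proj_mat_idem[OF sp(1)] proj_mat_trace[OF sp(1)] sp(2) by simp
  finally show ?thesis
    using mat_inner_centered_proj[OF assms assms] by simp
qed

lemma mat_inner_centered_proj_le:
  fixes p q :: "(real^'n) set"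
  assumes "p \<in> grassmannian m" "q \<in> grassmannian m" "0 \<le> \<delta>" "\<delta> \<le> chordal_dist p q"
  shows "mat_inner (centered_proj m p) (centered_proj m q) \<le>
    real m - \<delta>\<^sup>2 - (real m)\<^sup>2 / real CARD('n)"
proof -
  have "\<delta> \<le> sqrt (real m - mat_inner (proj_mat p) (proj_mat q))"
    using assms(4) chordal_dist_proj_mat[OF assms(1,2)] by simp
  then have "\<delta>\<^sup>2 \<le> real m - mat_inner (proj_mat p) (proj_mat q)"
    using assms(3) by (metis abs_of_nonneg real_sqrt_abs real_sqrt_le_iff)
  then show ?thesis
    using mat_inner_centered_proj[OF assms(1,2)] by simp
qed

section \<open>Delsarte's linear programming bound\<close>

lemma cubic_delsarte_decomposition:
  fixes x t b c :: real
  assumes "t \<noteq> 0"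
  defines "Q \<equiv> c + b * t - t\<^sup>2"
  shows "(x - t) * (x + c / t)\<^sup>2 =
    c / t * Q + Q * (c + b * t) / t\<^sup>2 * x + (c / t + Q / t) * (x\<^sup>2 - b * x - c) + x * (x\<^sup>2 - b * x - c)"
  using assms by (simp add: field_simps power2_eq_square power3_eq_cube)

lemma double_sum_le_diagonal:
  fixes f :: "'a \<Rightarrow> 'a \<Rightarrow> real"
  assumes "finite C" "\<And>p. p \<in> C \<Longrightarrow> f p p = y"
    and "\<And>p q. p \<in> C \<Longrightarrow> q \<in> C \<Longrightarrow> p \<noteq> q \<Longrightarrow> f p q \<le> 0"
  shows "(\<Sum>p\<in>C. \<Sum>q\<in>C. f p q) \<le> real (card C) * y"
proof -
  have "(\<Sum>q\<in>C. f p q) \<le> y" if "p \<in> C" for p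
  proof -
    have "(\<Sum>q\<in>C - {p}. f p q) \<le> 0"
      using assms(3) that by (intro sum_nonpos) auto
    then show ?thesis
      using assms(1,2) that by (simp add: sum.remove)
  qed
  then have "(\<Sum>p\<in>C. \<Sum>q\<in>C. f p q) \<le> (\<Sum>p\<in>C. y)"
    by (rule sum_mono)
  then show ?thesis
    by simp
qed

lemma delsarte_cubic_bound:
  fixes C :: "'a set" and u :: "'a \<Rightarrow> 'a \<Rightarrow> real" and M t b c :: real
  assumes "finite C"
    and diag: "\<And>p. p \<in> C \<Longrightarrow> u p p = M"
    and off_diag: "\<And>p q. p \<in> C \<Longrightarrow> q \<in> C \<Longrightarrow> p \<noteq> q \<Longrightarrow> u p q \<le> t"
    and "0 < t" "t \<le> M" "0 < c" and Q: "0 < c + b * t - t\<^sup>2"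
    and linear: "0 \<le> (\<Sum>p\<in>C. \<Sum>q\<in>C. u p q)"
    and quadratic: "0 \<le> (\<Sum>p\<in>C. \<Sum>q\<in>C. (u p q)\<^sup>2 - b * u p q - c)"
    and cubic: "0 \<le> (\<Sum>p\<in>C. \<Sum>q\<in>C. u p q * ((u p q)\<^sup>2 - b * u p q - c))"
  shows "real (card C) \<le> (M - t) * (M + c / t)\<^sup>2 / (c / t * (c + b * t - t\<^sup>2))"
proof -
  define F where "F x = (x - t) * (x + c / t)\<^sup>2" for x
  define n where "n = real (card C)"
  define f0 f1 f2 where "f0 = c / t * (c + b * t - t\<^sup>2)"
    and "f1 = (c + b * t - t\<^sup>2) * (c + b * t) / t\<^sup>2" and "f2 = c / t + (c + b * t - t\<^sup>2) / t"
  have "0 < c + b * t"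
    using Q zero_le_power2[of t] by linarith
  then have "0 < f0" "0 \<le> f1" "0 \<le> f2"
    unfolding f0_def f1_def f2_def using \<open>0 < t\<close> \<open>0 < c\<close> Q by simp_all
  have decomposition: "F x = f0 + f1 * x + f2 * (x\<^sup>2 - b * x - c) + x * (x\<^sup>2 - b * x - c)" for x
    unfolding F_def f0_def f1_def f2_def by (rule cubic_delsarte_decomposition) (use \<open>0 < t\<close> in simp)
  have "f0 * n * n = (\<Sum>p\<in>C. \<Sum>q\<in>C. f0)"
    by (simp add: n_def)
  also have "\<dots> \<le> (\<Sum>p\<in>C. \<Sum>q\<in>C. f0) + f1 * (\<Sum>p\<in>C. \<Sum>q\<in>C. u p q)
      + f2 * (\<Sum>p\<in>C. \<Sum>q\<in>C. (u p q)\<^sup>2 - b * u p q - c)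
      + (\<Sum>p\<in>C. \<Sum>q\<in>C. u p q * ((u p q)\<^sup>2 - b * u p q - c))"
    using \<open>0 \<le> f1\<close> \<open>0 \<le> f2\<close> linear quadratic cubic by simp
  also have "\<dots> = (\<Sum>p\<in>C. \<Sum>q\<in>C. F (u p q))"
    unfolding decomposition by (simp add: sum.distrib sum_distrib_left)
  also have "\<dots> \<le> n * F M"
    unfolding n_def using \<open>finite C\<close> diag off_diag
    by (intro double_sum_le_diagonal) (auto simp: F_def intro: mult_nonpos_nonneg)
  finally have "f0 * n * n \<le> n * F M" .
  moreover have "0 \<le> F M"
    unfolding F_def using \<open>t \<le> M\<close> by simp
  ultimately have "n \<le> F M / f0"
    using \<open>0 < f0\<close> by (cases "n = 0") (simp_all add: field_simps n_def)
  then show ?thesis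
    unfolding n_def F_def f0_def .
qed

lemma quadratic_pos_below_root:
  fixes t b c :: real
  assumes "0 < c" "0 < t" "t < b / 2 + sqrt (b\<^sup>2 / 4 + c)"
  shows "0 < c + b * t - t\<^sup>2"
proof -
  define S where "S = sqrt (b\<^sup>2 / 4 + c)"
  have S2: "S\<^sup>2 = b\<^sup>2 / 4 + c"
    unfolding S_def using assms(1) by simp
  have "sqrt ((b / 2)\<^sup>2) \<le> S"
    unfolding S_def using assms(1) by (simp add: power_divide)
  then have "b / 2 \<le> S"
    by simp
  then have "(t - (b / 2 - S)) * (t - (b / 2 + S)) < 0"
    using assms(2,3) unfolding S_def by (intro mult_pos_neg) auto
  moreover have "(t - (b / 2 - S)) * (t - (b / 2 + S)) = t\<^sup>2 - b * t - c"
    using S2 by (simp add: algebra_simps power2_eq_square)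
  ultimately show ?thesis
    by linarith
qed

lemma grassmann_gram_constants:
  fixes N m :: real
  assumes "0 < N"
  shows "(1 - 2 * (m / N))\<^sup>2 / ((N + 2) / 4 - 2 / N) = 4 * (N - 2 * m)\<^sup>2 / (N * (N - 2) * (N + 4))"
    and "((m / N - (m / N)\<^sup>2) * N)\<^sup>2 / (N * (N + 1) / 2 - 1) =
      2 * m\<^sup>2 * (N - m)\<^sup>2 / (N\<^sup>2 * (N - 1) * (N + 2))"
proof -
  have "(N + 2) / 4 - 2 / N = (N - 2) * (N + 4) / (4 * N)"
    and "(1 - 2 * (m / N))\<^sup>2 = (N - 2 * m)\<^sup>2 / N\<^sup>2"
    using assms by (simp_all add: field_simps power2_eq_square)
  moreover have "X / N\<^sup>2 / (Y / (4 * N)) = 4 * X / (N * Y)" for X Y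
    using assms by (cases "Y = 0") (simp_all add: field_simps power2_eq_square)
  ultimately show "(1 - 2 * (m / N))\<^sup>2 / ((N + 2) / 4 - 2 / N) = 4 * (N - 2 * m)\<^sup>2 / (N * (N - 2) * (N + 4))"
    by (simp add: mult.assoc)
  have "N * (N + 1) / 2 - 1 = (N - 1) * (N + 2) / 2"
    and "(m / N - (m / N)\<^sup>2) * N = m * (N - m) / N"
    and "(X / N)\<^sup>2 / (Y / 2) = 2 * X\<^sup>2 / (N\<^sup>2 * Y)" for X Y
    using assms by (simp_all add: field_simps power2_eq_square)
  then show "((m / N - (m / N)\<^sup>2) * N)\<^sup>2 / (N * (N + 1) / 2 - 1) =
      2 * m\<^sup>2 * (N - m)\<^sup>2 / (N\<^sup>2 * (N - 1) * (N + 2))"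
    by (simp only: power_mult_distrib mult.assoc)
qed

lemma centered_proj_gram_sums_nonneg:
  fixes C :: "(real^'n) set set" and m :: nat and N b c :: real
  assumes "C \<subseteq> grassmannian m"
  defines "N \<equiv> real CARD('n)"
  defines "b \<equiv> 4 * (N - 2 * m)\<^sup>2 / (N * (N - 2) * (N + 4))"
  defines "c \<equiv> 2 * m\<^sup>2 * (N - m)\<^sup>2 / (N\<^sup>2 * (N - 1) * (N + 2))"
  defines "u \<equiv> \<lambda>p q. mat_inner (centered_proj m p) (centered_proj m q)"
  shows "0 \<le> (\<Sum>p\<in>C. \<Sum>q\<in>C. u p q)"
    and "0 \<le> (\<Sum>p\<in>C. \<Sum>q\<in>C. (u p q)\<^sup>2 - b * u p q - c)"
    and "0 \<le> (\<Sum>p\<in>C. \<Sum>q\<in>C. u p q * ((u p q)\<^sup>2 - b * u p q - c))"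
proof -
  have "0 < N"
    unfolding N_def by simp
  have sym: "centered_proj m p i j = centered_proj m p j i" if "p \<in> C" for p i j
    by (rule centered_proj_sym)
  have traceless: "(\<Sum>i\<in>UNIV. centered_proj m p i i) = 0" if "p \<in> C" for p
    using assms(1) that by (intro centered_proj_traceless) auto
  have square: "(\<Sum>j\<in>UNIV. centered_proj m p i j * centered_proj m p j l) =
      (1 - 2 * (real m / N)) * centered_proj m p i l + (real m / N - (real m / N)\<^sup>2) * kdelta i l"
    if "p \<in> C" for p i l
    using assms(1) that unfolding N_def by (intro centered_proj_square) (auto simp: grassmannian_def)
  have constants: "(1 - 2 * (real m / N))\<^sup>2 / ((N + 2) / 4 - 2 / N) = b"
    "((real m / N - (real m / N)\<^sup>2) * N)\<^sup>2 / (N * (N + 1) / 2 - 1) = c"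
    unfolding b_def c_def using grassmann_gram_constants[OF \<open>0 < N\<close>] by simp_all
  from gram_sums_nonneg[OF sym traceless square[unfolded N_def] constants[unfolded N_def]] show
    "0 \<le> (\<Sum>p\<in>C. \<Sum>q\<in>C. u p q)"
    "0 \<le> (\<Sum>p\<in>C. \<Sum>q\<in>C. (u p q)\<^sup>2 - b * u p q - c)"
    "0 \<le> (\<Sum>p\<in>C. \<Sum>q\<in>C. u p q * ((u p q)\<^sup>2 - b * u p q - c))"
    unfolding u_def N_def by simp_all
qed

lemma grassmann_delsarte_bound_eq:
  fixes N m t b :: real
  assumes "1 \<le> m" "2 * m \<le> N" "0 < t"
  defines "M \<equiv> m - m\<^sup>2 / N"
  defines "d \<equiv> 2 * m * (N - m) / (N * (N - 1) * (N + 2))"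
  defines "c \<equiv> 2 * m\<^sup>2 * (N - m)\<^sup>2 / (N\<^sup>2 * (N - 1) * (N + 2))"
  shows "(M - t) * (M + c / t)\<^sup>2 / (c / t * (c + b * t - t\<^sup>2)) =
    (M - t) * (t + d)\<^sup>2 * (N - 1) * (N + 2) / (2 * t * (- t\<^sup>2 + b * t + c))"
proof -
  have "0 < d"
    unfolding d_def using assms(1,2) by (intro divide_pos_pos mult_pos_pos) auto
  have "M = m * (N - m) / N"
    unfolding M_def using assms(1,2) by (simp add: field_simps power2_eq_square)
  then have "0 < M"
    using assms(1,2) by simp
  have c: "c = M * d" and K: "(N - 1) * (N + 2) = 2 * M / d"
    unfolding c_def d_def M_def using assms(1,2) by (simp_all add: field_simps power2_eq_square)
  have "(M - t) * (M + M * d / t)\<^sup>2 / (M * d / t * Q) = (M - t) * (t + d)\<^sup>2 * (2 * M / d) / (2 * t * Q)"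
    for Q
    using \<open>0 < t\<close> \<open>0 < d\<close> \<open>0 < M\<close> by (cases "Q = 0") (simp_all add: field_simps power2_eq_square)
  moreover have "(M - t) * (t + d)\<^sup>2 * (N - 1) * (N + 2) = (M - t) * (t + d)\<^sup>2 * (2 * M / d)"
    unfolding K[symmetric] by (simp only: mult.assoc)
  moreover have "- t\<^sup>2 + b * t + c = c + b * t - t\<^sup>2"
    by simp
  ultimately show ?thesis
    unfolding c by (simp only:)
qed

theorem theorem3p2:
  fixes C :: "(real ^ 'n) set set" and m :: nat and \<delta> :: real and N s d b c :: real
  defines "N \<equiv> real CARD('n)"
  defines "s \<equiv> real m - \<delta>\<^sup>2"
  defines "d \<equiv> 2 * m * (N - m) / (N * (N - 1) * (N + 2))"
  defines "b \<equiv> 4 * (N - 2 * m)\<^sup>2 / (N * (N - 2) * (N + 4))"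
  defines "c \<equiv> 2 * m\<^sup>2 * (N - m)\<^sup>2 / (N\<^sup>2 * (N - 1) * (N + 2))"
  assumes "1 \<le> m" and "2 * m \<le> CARD('n)" and "\<delta> > 0"
    and "m\<^sup>2 / N < s" and "s < m\<^sup>2 / N + b / 2 + sqrt (b\<^sup>2 / 4 + c)"
    and "delta_code m \<delta> C"
  shows "real (card C) \<le>
    (m - s) * (s - m\<^sup>2 / N + d)\<^sup>2 * (N - 1) * (N + 2) /
    (2 * (s - m\<^sup>2 / N) * (- (s - m\<^sup>2 / N)\<^sup>2 + b * (s - m\<^sup>2 / N) + c))"
proof -
  have m: "1 \<le> real m" "2 * real m \<le> N"
    using assms(6,7) unfolding N_def by simp_all
  have code: "finite C" "C \<subseteq> grassmannian m"
    "\<And>p q. p \<in> C \<Longrightarrow> q \<in> C \<Longrightarrow> p \<noteq> q \<Longrightarrow> \<delta> \<le> chordal_dist p q"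
    using assms(11) unfolding delta_code_def by auto
  define u where "u p q = mat_inner (centered_proj m p) (centered_proj m q)" for p q :: "(real^'n) set"
  define M where "M = real m - (real m)\<^sup>2 / N"
  define t where "t = s - (real m)\<^sup>2 / N"
  have "0 < c"
    unfolding c_def using m by (intro divide_pos_pos mult_pos_pos) auto
  have "0 < t" "t \<le> M"
    using assms(9) unfolding t_def M_def s_def by simp_all
  have diag: "u p p = M" if "p \<in> C" for p
    using code(2) that unfolding u_def M_def N_def by (simp add: mat_inner_centered_proj_self subsetD)
  have off_diag: "u p q \<le> t" if "p \<in> C" "q \<in> C" "p \<noteq> q" for p q
    using mat_inner_centered_proj_le[of p m q \<delta>] code that assms(8)
    unfolding u_def t_def s_def N_def by fastforce
  have "0 < c + b * t - t\<^sup>2"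
    using quadratic_pos_below_root[OF \<open>0 < c\<close> \<open>0 < t\<close>, of b] assms(10) unfolding t_def by simp
  from delsarte_cubic_bound[OF code(1) diag off_diag \<open>0 < t\<close> \<open>t \<le> M\<close> \<open>0 < c\<close> this
      centered_proj_gram_sums_nonneg[OF code(2), folded N_def, folded b_def c_def u_def]]
  have "real (card C) \<le> (M - t) * (M + c / t)\<^sup>2 / (c / t * (c + b * t - t\<^sup>2))" .
  also have "\<dots> = (m - s) * (s - m\<^sup>2 / N + d)\<^sup>2 * (N - 1) * (N + 2) /
      (2 * (s - m\<^sup>2 / N) * (- (s - m\<^sup>2 / N)\<^sup>2 + b * (s - m\<^sup>2 / N) + c))"
    unfolding M_def c_def d_def using grassmann_delsarte_bound_eq[OF m \<open>0 < t\<close>]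
    by (simp add: t_def s_def)
  finally show ?thesis .
qed

end
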